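(* Let $\mathbf u$ be an aperiodic infinite word over a finite alphabet whose language is closed under reversal, and let $N$ be an integer such that $T_{\mathbf u}(n)=0$ for all $n\ge N$. Then for every factor $w$ of $\mathbf u$ with $|w|\ge N$, the occurrences of $w$ and of $\overline w$ in $\mathbf u$ alternate: if $w\neq\overline w$, then between any two occurrences of $w$ in $\mathbf u$ there is an occurrence of $\overline w$, and between any two occurrences of $\overline w$ there is an occurrence of $w$.
   Context: An infinite word is aperiodic if it is not eventually periodic. For a finite word $w=w_0\cdots w_{n-1}$ its reversal is $\overline{w}=w_{n-1}\cdots w_0$; $w$ is a palindrome if $w=\overline{w}$. An occurrence of $w$ in $\mathbf u=u_0u_1\cdots$ is an index $i$ with $u_i\cdots u_{i+|w|-1}=w$. $\mathcal L_n(\mathbf u)$ is the set of factors of $\mathbf u$ of length $n$; the language is closed under reversal if every factor's reversal is a factor. $\mathcal C_{\mathbf u}(n)=\#\mathcal L_n(\mathbf u)$, $\mathcal P_{\mathbf u}(n)$ is the number of palindromes in $\mathcal L_n(\mathbf u)$, and $T_{\mathbf u}(n)=\mathcal C_{\mathbf u}(n+1)-\mathcal C_{\mathbf u}(n)+2-\mathcal P_{\mathbf u}(n+1)-\mathcal P_{\mathbf u}(n)$. *)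

theory Defs
  imports Main
begin

definition eventually_periodic :: "(nat \<Rightarrow> 'a) \<Rightarrow> bool" where
  "eventually_periodic u \<longleftrightarrow> (\<exists>p>0. \<exists>n0. \<forall>i\<ge>n0. u (i + p) = u i)"

definition aperiodic :: "(nat \<Rightarrow> 'a) \<Rightarrow> bool" where
  "aperiodic u \<longleftrightarrow> \<not> eventually_periodic u"

definition occurs_at :: "(nat \<Rightarrow> 'a) \<Rightarrow> 'a list \<Rightarrow> nat \<Rightarrow> bool" where
  "occurs_at u w i \<longleftrightarrow> map u [i..<i + length w] = w"

definition factor :: "'a list \<Rightarrow> (nat \<Rightarrow> 'a) \<Rightarrow> bool" where
  "factor w u \<longleftrightarrow> (\<exists>i. occurs_at u w i)"

definition factors_len :: "(nat \<Rightarrow> 'a) \<Rightarrow> nat \<Rightarrow> 'a list set" where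
  "factors_len u n = {w. length w = n \<and> factor w u}"

definition palindrome :: "'a list \<Rightarrow> bool" where
  "palindrome w \<longleftrightarrow> rev w = w"

definition closed_under_reversal :: "(nat \<Rightarrow> 'a) \<Rightarrow> bool" where
  "closed_under_reversal u \<longleftrightarrow> (\<forall>w. factor w u \<longrightarrow> factor (rev w) u)"

definition complexity :: "(nat \<Rightarrow> 'a) \<Rightarrow> nat \<Rightarrow> nat" where
  "complexity u n = card (factors_len u n)"

definition pal_complexity :: "(nat \<Rightarrow> 'a) \<Rightarrow> nat \<Rightarrow> nat" where
  "pal_complexity u n = card {w \<in> factors_len u n. palindrome w}"

definition T_fun :: "(nat \<Rightarrow> 'a) \<Rightarrow> nat \<Rightarrow> int" where
  "T_fun u n = int (complexity u (n + 1)) - int (complexity u n) + 2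
               - int (pal_complexity u (n + 1)) - int (pal_complexity u n)"

end

theory Submission
  imports Defs
begin

text \<open>
  Identify every factor with its reversal and consider the reduced Rauzy graph of order \<open>m\<close>:
  its vertices are the classes \<open>{x, rev x}\<close> of factors of length \<open>m\<close>, its edges the classes of
  non-palindromic factors of length \<open>m + 1\<close>, joining the classes of their prefix and suffix.
  Reading \<open>u\<close> from left to right is a walk through all vertices, so the graph is connected, and
  \<open>T\<^sub>u(m) = 0\<close> says exactly that it has one vertex more than it has edges: it is a tree.
  If \<open>w\<close> occurred at \<open>i < k\<close> with neither \<open>w\<close> nor \<open>rev w\<close> strictly in between, the walk from
  \<open>i + 1\<close> to \<open>k\<close> would join the endpoints of the edge read at \<open>i\<close> without using it: a cycle.
\<close>

definition subword :: "(nat \<Rightarrow> 'a) \<Rightarrow> nat \<Rightarrow> nat \<Rightarrow> 'a list" where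
  "subword u i n = map u [i..<i + n]"

lemma length_subword [simp]: "length (subword u i n) = n"
  by (simp add: subword_def)

lemma take_subword_Suc: "take n (subword u i (Suc n)) = subword u i n"
  by (simp add: subword_def take_map)

lemma drop_subword_Suc: "drop 1 (subword u i (Suc n)) = subword u (Suc i) n"
  by (simp add: subword_def drop_map)

lemma occurs_at_iff_subword: "occurs_at u w i \<longleftrightarrow> subword u i (length w) = w"
  by (simp add: occurs_at_def subword_def)

lemma factors_len_iff: "x \<in> factors_len u n \<longleftrightarrow> (\<exists>i. subword u i n = x)"
  by (auto simp: factors_len_def factor_def occurs_at_iff_subword)

lemma subword_in_factors_len: "subword u i n \<in> factors_len u n"
  by (auto simp: factors_len_iff)

lemma finite_factors_len:
  assumes "finite (range u)"
  shows "finite (factors_len u n)"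
proof (rule finite_subset)
  show "factors_len u n \<subseteq> {xs. set xs \<subseteq> range u \<and> length xs = n}"
    by (auto simp: factors_len_iff subword_def)
  show "finite {xs. set xs \<subseteq> range u \<and> length xs = n}"
    using finite_lists_length_eq[OF assms] by simp
qed

lemma rev_in_factors_len:
  "closed_under_reversal u \<Longrightarrow> x \<in> factors_len u n \<Longrightarrow> rev x \<in> factors_len u n"
  by (auto simp: factors_len_def closed_under_reversal_def)

definition rev_class :: "'a list \<Rightarrow> 'a list set" where
  "rev_class x = {x, rev x}"

lemma rev_class_rev [simp]: "rev_class (rev x) = rev_class x"
  by (auto simp: rev_class_def)

lemma rev_class_eq_iff: "rev_class x = rev_class y \<longleftrightarrow> y = x \<or> y = rev x"
  by (auto simp: rev_class_def doubleton_eq_iff)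

lemma rev_class_of_mem: "y \<in> rev_class x \<Longrightarrow> rev_class y = rev_class x"
  by (auto simp: rev_class_def)

lemma card_rev_class_image:
  assumes fin: "finite A" and rev_closed: "\<And>x. x \<in> A \<Longrightarrow> rev x \<in> A"
  shows "2 * card (rev_class ` A) = card A + card {x \<in> A. palindrome x}"
proof -
  define P where "P = {x \<in> A. palindrome x}"
  define Q where "Q = A - P"
  have "inj_on rev_class P"
    by (rule inj_onI) (auto simp: P_def palindrome_def rev_class_eq_iff)
  then have card_P: "card (rev_class ` P) = card P"
    by (rule card_image)
  have "2 * card (rev_class ` Q) = card (\<Union> (rev_class ` Q))"
  proof (rule card_partition)
    show "finite (rev_class ` Q)" "finite (\<Union> (rev_class ` Q))"
      using fin by (auto simp: Q_def rev_class_def)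
    show "card c = 2" if "c \<in> rev_class ` Q" for c
      using that by (auto simp: Q_def P_def rev_class_def palindrome_def)
    show "c \<inter> c' = {}" if "c \<in> rev_class ` Q" "c' \<in> rev_class ` Q" "c \<noteq> c'" for c c'
      using that rev_class_of_mem by blast
  qed
  also have "\<Union> (rev_class ` Q) = Q"
    using rev_closed by (auto simp: Q_def P_def rev_class_def palindrome_def)
  finally have card_Q: "2 * card (rev_class ` Q) = card Q" .
  have classes_disjoint: "rev_class ` P \<inter> rev_class ` Q = {}"
  proof (intro equalityI subsetI)
    fix c assume "c \<in> rev_class ` P \<inter> rev_class ` Q"
    then obtain x y where "x \<in> P" "y \<in> Q" "rev_class x = rev_class y"
      by blast
    then show "c \<in> {}"
      by (auto simp: P_def Q_def rev_class_eq_iff palindrome_def)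
  qed simp
  have "card (rev_class ` (P \<union> Q)) = card (rev_class ` P) + card (rev_class ` Q)"
    unfolding image_Un using fin classes_disjoint
    by (intro card_Un_disjoint) (auto simp: P_def Q_def)
  moreover have "card (P \<union> Q) = card P + card Q"
    using fin by (intro card_Un_disjoint) (auto simp: P_def Q_def)
  moreover have "P \<union> Q = A"
    by (auto simp: P_def Q_def)
  ultimately show ?thesis
    using card_P card_Q by (simp add: P_def)
qed

definition edge_rel :: "('e \<Rightarrow> 'v set) \<Rightarrow> 'e set \<Rightarrow> 'v rel" where
  "edge_rel ends E = {(x, y). \<exists>c\<in>E. ends c = {x, y}}"

lemma sym_edge_rel: "sym (edge_rel ends E)"
  by (auto simp: sym_def edge_rel_def insert_commute)

lemma rtrancl_edge_rel_sym:
  "(x, y) \<in> (edge_rel ends E)\<^sup>* \<Longrightarrow> (y, x) \<in> (edge_rel ends E)\<^sup>*"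
  using sym_rtrancl[OF sym_edge_rel] by (metis symD)

lemma rtrancl_edge_rel_Diff_edge:
  assumes c: "ends c = {x, y}" and bypass: "(x, y) \<in> (edge_rel ends (E - {c}))\<^sup>*"
  shows "(edge_rel ends E)\<^sup>* \<subseteq> (edge_rel ends (E - {c}))\<^sup>*"
proof (rule rtrancl_subset_rtrancl, rule subsetI)
  fix p assume "p \<in> edge_rel ends E"
  then obtain a b d where p: "p = (a, b)" "d \<in> E" "ends d = {a, b}"
    by (auto simp: edge_rel_def)
  show "p \<in> (edge_rel ends (E - {c}))\<^sup>*"
  proof (cases "d = c")
    case True
    then have "{a, b} = {x, y}"
      using p c by simp
    then show ?thesis
      using p bypass rtrancl_edge_rel_sym by (auto simp: doubleton_eq_iff)
  next
    case False
    then have "p \<in> edge_rel ends (E - {c})"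
      using p by (auto simp: edge_rel_def)
    then show ?thesis ..
  qed
qed

text \<open>
  Send each vertex \<open>v \<noteq> r\<close> to the last edge of a shortest path from \<open>r\<close> to \<open>v\<close>. The distance
  from \<open>r\<close> drops by one across that edge, so it cannot also be the image of its other endpoint.
\<close>
lemma card_le_card_edges_if_connected:
  assumes fin: "finite E" and connected: "\<And>v. v \<in> V \<Longrightarrow> (r, v) \<in> (edge_rel ends E)\<^sup>*"
  shows "card (V - {r}) \<le> card E"
proof -
  let ?R = "edge_rel ends E"
  define d where "d v = (LEAST n. (r, v) \<in> ?R ^^ n)" for v
  have d_path: "(r, v) \<in> ?R ^^ d v" if "(r, v) \<in> ?R\<^sup>*" for v
    using that unfolding d_def by (metis LeastI rtrancl_power)
  have d_le: "d v \<le> n" if "(r, v) \<in> ?R ^^ n" for v n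
    using that unfolding d_def by (rule Least_le)
  have "\<exists>c. c \<in> E \<and> (\<exists>y. ends c = {y, v} \<and> d v = Suc (d y))" if v: "v \<in> V - {r}" for v
  proof -
    have path: "(r, v) \<in> ?R ^^ d v"
      using d_path connected v by blast
    with v obtain k where k: "d v = Suc k"
      by (cases "d v") auto
    with path obtain y where y: "(r, y) \<in> ?R ^^ k" "(y, v) \<in> ?R"
      by auto
    have "(r, v) \<in> ?R ^^ Suc (d y)"
      using d_path[of y] y by (metis relpow_Suc_I relpow_imp_rtrancl)
    then have "d v = Suc (d y)"
      using d_le[OF y(1)] d_le k by fastforce
    with y(2) show ?thesis
      by (auto simp: edge_rel_def)
  qed
  then obtain f where f: "\<And>v. v \<in> V - {r} \<Longrightarrow> f v \<in> E \<and> (\<exists>y. ends (f v) = {y, v} \<and> d v = Suc (d y))"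
    by metis
  have "inj_on f (V - {r})"
  proof (rule inj_onI)
    fix v v' assume v: "v \<in> V - {r}" and v': "v' \<in> V - {r}" and "f v = f v'"
    moreover obtain y where "ends (f v) = {y, v}" "d v = Suc (d y)"
      using f[OF v] by blast
    moreover obtain y' where "ends (f v') = {y', v'}" "d v' = Suc (d y')"
      using f[OF v'] by blast
    ultimately show "v = v'"
      by (auto simp: doubleton_eq_iff)
  qed
  moreover have "f ` (V - {r}) \<subseteq> E"
    using f by auto
  ultimately show ?thesis
    using card_inj_on_le fin by blast
qed

lemma bridge_if_connected_card_eq_Suc:
  assumes fin: "finite E" and "r \<in> V" and card_V: "card V = Suc (card E)"
    and connected: "\<And>v. v \<in> V \<Longrightarrow> (r, v) \<in> (edge_rel ends E)\<^sup>*"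
    and c: "c \<in> E" "ends c = {x, y}"
  shows "(x, y) \<notin> (edge_rel ends (E - {c}))\<^sup>*"
proof
  assume "(x, y) \<in> (edge_rel ends (E - {c}))\<^sup>*"
  then have "(edge_rel ends E)\<^sup>* \<subseteq> (edge_rel ends (E - {c}))\<^sup>*"
    using rtrancl_edge_rel_Diff_edge c(2) by metis
  then have "card (V - {r}) \<le> card (E - {c})"
    using fin connected by (intro card_le_card_edges_if_connected) auto
  moreover have "card E > 0"
    using fin c(1) card_gt_0_iff by blast
  ultimately show False
    using \<open>r \<in> V\<close> card_V c(1) by simp
qed

text \<open>
  A class \<open>{e, rev e}\<close> of factors of length \<open>m + 1\<close> joins
  the classes of the prefix and the suffix of length \<open>m\<close> of \<open>e\<close>; for \<open>rev e\<close> these are the same two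
  classes. Palindromes would only give loops and are left out.
\<close>
definition class_ends :: "nat \<Rightarrow> 'a list set \<Rightarrow> 'a list set set" where
  "class_ends m c = (\<Union>e\<in>c. {rev_class (take m e), rev_class (drop 1 e)})"

definition rauzy_vertices :: "(nat \<Rightarrow> 'a) \<Rightarrow> nat \<Rightarrow> 'a list set set" where
  "rauzy_vertices u m = rev_class ` factors_len u m"

definition rauzy_edges :: "(nat \<Rightarrow> 'a) \<Rightarrow> nat \<Rightarrow> 'a list set set" where
  "rauzy_edges u m = rev_class ` {e \<in> factors_len u (Suc m). \<not> palindrome e}"

lemma class_ends_rev_class:
  "length e = Suc m \<Longrightarrow> class_ends m (rev_class e) = {rev_class (take m e), rev_class (drop 1 e)}"
  by (auto simp: class_ends_def rev_class_def take_rev drop_rev)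

lemma drop_eq_rev_take_if_palindrome:
  "palindrome e \<Longrightarrow> length e = Suc m \<Longrightarrow> drop 1 e = rev (take m e)"
  by (metis diff_Suc_1 drop_rev palindrome_def)

lemma rev_class_subword_Suc_neq:
  assumes "subword u t m \<noteq> subword u i m" and "subword u (Suc t) m \<noteq> rev (subword u i m)"
  shows "rev_class (subword u t (Suc m)) \<noteq> rev_class (subword u i (Suc m))"
proof -
  have "subword u t (Suc m) \<noteq> subword u i (Suc m)"
    using assms(1) take_subword_Suc by metis
  moreover have "subword u t (Suc m) \<noteq> rev (subword u i (Suc m))"
  proof
    assume "subword u t (Suc m) = rev (subword u i (Suc m))"
    then have "drop 1 (subword u t (Suc m)) = rev (take m (subword u i (Suc m)))"
      by (simp add: drop_rev)
    then show False
      using assms(2) take_subword_Suc drop_subword_Suc by metis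
  qed
  ultimately show ?thesis
    by (auto simp: rev_class_eq_iff)
qed

lemma card_rauzy_vertices_if_T_fun_zero:
  assumes fin: "finite (range u)" and closed: "closed_under_reversal u" and T0: "T_fun u m = 0"
  shows "card (rauzy_vertices u m) = Suc (card (rauzy_edges u m))"
proof -
  let ?L = "factors_len u"
  define NP where "NP = {e \<in> ?L (Suc m). \<not> palindrome e}"
  have finL: "finite (?L n)" for n
    using finite_factors_len[OF fin] .
  have "2 * card (rauzy_vertices u m) = card (?L m) + card {x \<in> ?L m. palindrome x}"
    unfolding rauzy_vertices_def
    by (rule card_rev_class_image) (use finL rev_in_factors_len[OF closed] in auto)
  moreover have "2 * card (rauzy_edges u m) = card NP + card {x \<in> NP. palindrome x}"
    unfolding rauzy_edges_def NP_def
    by (rule card_rev_class_image)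
      (use finL rev_in_factors_len[OF closed] in \<open>auto simp: palindrome_def\<close>)
  moreover have "{x \<in> NP. palindrome x} = {}"
    by (auto simp: NP_def)
  moreover have "card (?L (Suc m)) = card NP + card {x \<in> ?L (Suc m). palindrome x}"
    unfolding NP_def using finL
    by (subst card_Un_disjoint[symmetric]) (auto intro: arg_cong[where f = card])
  ultimately show ?thesis
    using T0 by (simp add: T_fun_def complexity_def pal_complexity_def)
qed

lemma rauzy_walk:
  assumes "a \<le> b"
    and steps: "\<And>t. a \<le> t \<Longrightarrow> t < b \<Longrightarrow>
      palindrome (subword u t (Suc m)) \<or> rev_class (subword u t (Suc m)) \<in> E"
  shows "(rev_class (subword u a m), rev_class (subword u b m)) \<in> (edge_rel (class_ends m) E)\<^sup>*"
  using assms
proof (induction b rule: dec_induct)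
  case base
  show ?case by simp
next
  case (step n)
  define e where "e = subword u n (Suc m)"
  have e: "length e = Suc m" "take m e = subword u n m" "drop 1 e = subword u (Suc n) m"
    unfolding e_def by (simp, rule take_subword_Suc, rule drop_subword_Suc)
  have IH: "(rev_class (subword u a m), rev_class (subword u n m)) \<in> (edge_rel (class_ends m) E)\<^sup>*"
    using step by simp
  from step have "palindrome e \<or> rev_class e \<in> E"
    by (simp add: e_def)
  then show ?case
  proof
    assume "palindrome e"
    then show ?thesis
      using IH drop_eq_rev_take_if_palindrome[OF _ e(1)] e by (metis rev_class_rev)
  next
    assume "rev_class e \<in> E"
    then have "(rev_class (subword u n m), rev_class (subword u (Suc n) m)) \<in> edge_rel (class_ends m) E"
      using class_ends_rev_class[OF e(1)] e by (auto simp: edge_rel_def)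
    with IH show ?thesis ..
  qed
qed

lemma rauzy_connected:
  assumes "v \<in> rauzy_vertices u m"
  shows "(rev_class (subword u i m), v) \<in> (edge_rel (class_ends m) (rauzy_edges u m))\<^sup>*"
proof -
  obtain p where v: "v = rev_class (subword u p m)"
    using assms by (auto simp: rauzy_vertices_def factors_len_iff)
  have steps: "palindrome (subword u t (Suc m)) \<or> rev_class (subword u t (Suc m)) \<in> rauzy_edges u m"
    for t by (auto simp: rauzy_edges_def subword_in_factors_len)
  show ?thesis
  proof (cases "i \<le> p")
    case True
    show ?thesis
      unfolding v by (rule rauzy_walk[OF True steps])
  next
    case False
    then have "p \<le> i" by simp
    show ?thesis
      unfolding v by (rule rtrancl_edge_rel_sym, rule rauzy_walk[OF \<open>p \<le> i\<close> steps])
  qed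
qed

lemma rev_occurs_between_consecutive_occurrences:
  assumes fin: "finite (range u)" and closed: "closed_under_reversal u"
    and T0: "T_fun u (length w) = 0" and not_pal: "w \<noteq> rev w"
    and occ_i: "subword u i (length w) = w" and occ_k: "subword u k (length w) = w" and "i < k"
    and no_w_between: "\<And>t. i < t \<Longrightarrow> t < k \<Longrightarrow> subword u t (length w) \<noteq> w"
  shows "\<exists>t. i < t \<and> t < k \<and> subword u t (length w) = rev w"
proof (rule ccontr)
  let ?m = "length w"
  let ?V = "rauzy_vertices u ?m" and ?E = "rauzy_edges u ?m"
  assume "\<nexists>t. i < t \<and> t < k \<and> subword u t ?m = rev w"
  then have no_rev_w: "subword u t ?m \<noteq> rev w" if "i < t" "t \<le> k" for t
    using that occ_k not_pal by (cases "t = k") auto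
  define e where "e = subword u i (Suc ?m)"
  have e: "length e = Suc ?m" "take ?m e = w" "drop 1 e = subword u (Suc i) ?m"
    unfolding e_def by (simp, use occ_i take_subword_Suc in metis, rule drop_subword_Suc)
  have "\<not> palindrome e"
    using drop_eq_rev_take_if_palindrome[OF _ e(1)] e no_rev_w[of "Suc i"] \<open>i < k\<close> by auto
  then have e_edge: "rev_class e \<in> ?E"
    by (auto simp: rauzy_edges_def e_def subword_in_factors_len)
  let ?E' = "?E - {rev_class e}"
  have "palindrome (subword u t (Suc ?m)) \<or> rev_class (subword u t (Suc ?m)) \<in> ?E'"
    if "Suc i \<le> t" "t < k" for t
    using that no_w_between no_rev_w occ_i rev_class_subword_Suc_neq[of u t ?m i]
    by (auto simp: rauzy_edges_def e_def subword_in_factors_len)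
  then have "(rev_class (subword u (Suc i) ?m), rev_class w) \<in> (edge_rel (class_ends ?m) ?E')\<^sup>*"
    using rauzy_walk[of "Suc i" k u ?m ?E'] \<open>i < k\<close> occ_k by simp
  moreover have "class_ends ?m (rev_class e) = {rev_class (subword u (Suc i) ?m), rev_class w}"
    using class_ends_rev_class[OF e(1)] e by auto
  moreover have "finite ?E"
    using finite_factors_len[OF fin] by (simp add: rauzy_edges_def)
  moreover have "rev_class w \<in> ?V"
    using occ_i subword_in_factors_len by (metis rauzy_vertices_def image_eqI)
  ultimately show False
    using bridge_if_connected_card_eq_Suc[of ?E "rev_class w" ?V] e_edge occ_i rauzy_connected
      card_rauzy_vertices_if_T_fun_zero[OF fin closed T0] by metis
qed

lemma rev_occurs_between_occurrences:
  assumes fin: "finite (range u)" and closed: "closed_under_reversal u"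
    and T0: "T_fun u (length w) = 0" and not_pal: "w \<noteq> rev w"
    and occ_i: "occurs_at u w i" and occ_j: "occurs_at u w j" and "i < j"
  shows "\<exists>k. i < k \<and> k < j \<and> occurs_at u (rev w) k"
proof -
  define k where "k = (LEAST k. i < k \<and> occurs_at u w k)"
  have k: "i < k" "occurs_at u w k" "k \<le> j"
    using LeastI[of "\<lambda>k. i < k \<and> occurs_at u w k" j] Least_le[of _ j] occ_j \<open>i < j\<close>
    unfolding k_def by auto
  have "\<not> occurs_at u w t" if "i < t" "t < k" for t
    using that not_less_Least unfolding k_def by blast
  then obtain t where "i < t" "t < k" "subword u t (length w) = rev w"
    using rev_occurs_between_consecutive_occurrences[OF fin closed T0 not_pal] occ_i k
    by (metis occurs_at_iff_subword)
  then show ?thesis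
    using k by (auto simp: occurs_at_iff_subword)
qed

theorem corollary13:
  fixes u :: "nat \<Rightarrow> 'a" and N :: int
  assumes "finite (range u)"
    and "aperiodic u"
    and "closed_under_reversal u"
    and "\<forall>n::nat. int n \<ge> N \<longrightarrow> T_fun u n = 0"
  shows "\<forall>w. factor w u \<and> int (length w) \<ge> N \<and> w \<noteq> rev w \<longrightarrow>
           (\<forall>i j. occurs_at u w i \<and> occurs_at u w j \<and> i < j \<longrightarrow>
              (\<exists>k. i < k \<and> k < j \<and> occurs_at u (rev w) k)) \<and>
           (\<forall>i j. occurs_at u (rev w) i \<and> occurs_at u (rev w) j \<and> i < j \<longrightarrow>
              (\<exists>k. i < k \<and> k < j \<and> occurs_at u w k))"
proof (intro allI impI conjI)
  fix w assume w: "factor w u \<and> int (length w) \<ge> N \<and> w \<noteq> rev w"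
  then have T0: "T_fun u (length (rev w)) = 0" "T_fun u (length w) = 0"
    using assms(4) by auto
  show "\<exists>k. i < k \<and> k < j \<and> occurs_at u (rev w) k"
    if "occurs_at u w i \<and> occurs_at u w j \<and> i < j" for i j
    using rev_occurs_between_occurrences[OF assms(1,3) T0(2)] w that by blast
  show "\<exists>k. i < k \<and> k < j \<and> occurs_at u w k"
    if "occurs_at u (rev w) i \<and> occurs_at u (rev w) j \<and> i < j" for i j
    using rev_occurs_between_occurrences[OF assms(1,3) T0(1)] w that by fastforce
qed

end
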